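(* For all $n\geq 0$, $$d_n=\sum_{k=0}^{n}(-1)^{n-k}\binom{n}{k}m_k,$$ where $d_n$ is the number of symmetric Dyck paths of length $2n$ and $m_k$ is the number of symmetric Motzkin paths of length $2k$.
   Context: Steps: $U=(1,1)$, $D=(1,-1)$, $h=(1,0)$. A Dyck path of length $2n$ is a lattice path from $(0,0)$ to $(2n,0)$ using steps $U,D$ that never goes below the $x$-axis; a Motzkin path of length $2n$ is the same but steps $U,D,h$ are allowed. Such a path with step sequence $s_1\cdots s_{2n}$ is symmetric if for every $i$, $s_{2n+1-i}$ is the mirror of $s_i$ (mirror of $U$ is $D$, of $D$ is $U$, of $h$ is $h$), i.e. the path is invariant under reflection in the line $x=n$. *)

theory Defs
  imports Main
begin

datatype step = U | D | H

fun step_val :: "step \<Rightarrow> int" where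
  "step_val U = 1" | "step_val D = -1" | "step_val H = 0"

fun mirror :: "step \<Rightarrow> step" where
  "mirror U = D" | "mirror D = U" | "mirror H = H"

definition nonneg_bridge :: "step list \<Rightarrow> bool" where
  "nonneg_bridge s \<longleftrightarrow>
     (\<forall>i\<le>length s. (\<Sum>j<i. step_val (s ! j)) \<ge> 0) \<and> (\<Sum>j<length s. step_val (s ! j)) = 0"

definition dyck_path :: "nat \<Rightarrow> step list \<Rightarrow> bool" where
  "dyck_path n s \<longleftrightarrow> length s = 2 * n \<and> set s \<subseteq> {U, D} \<and> nonneg_bridge s"

definition motzkin_path :: "nat \<Rightarrow> step list \<Rightarrow> bool" where
  "motzkin_path n s \<longleftrightarrow> length s = 2 * n \<and> nonneg_bridge s"

text \<open>Symmetric: s_{2n+1-i} is the mirror of s_i (1-based); 0-based: s!(L-1-i) = mirror (s!i).\<close>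
definition symmetric_path :: "step list \<Rightarrow> bool" where
  "symmetric_path s \<longleftrightarrow> (\<forall>i<length s. s ! (length s - 1 - i) = mirror (s ! i))"

definition sym_dyck :: "nat \<Rightarrow> nat" where
  "sym_dyck n = card {s. dyck_path n s \<and> symmetric_path s}"

definition sym_motzkin :: "nat \<Rightarrow> nat" where
  "sym_motzkin n = card {s. motzkin_path n s \<and> symmetric_path s}"

end

theory Submission
  imports Defs
begin

text \<open>A symmetric path of length 2n is determined by its first half, which can be any path
  of length n that stays weakly above the axis (a meander). So d_n and m_n count Dyck
  and Motzkin meanders of length n. Splitting off the first step, both counts satisfy
  a recursion in the starting height h: the Motzkin one is the Dyck one plus an extra
  term for the horizontal step, which does not change h. Taking the inverse binomial
  transform in n turns that extra term into a difference that cancels it, so the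
  transformed Motzkin counts satisfy the Dyck recursion, at every height.\<close>

fun stays_nonneg :: "int \<Rightarrow> step list \<Rightarrow> bool" where
  "stays_nonneg h [] = True"
| "stays_nonneg h (x # xs) \<longleftrightarrow> 0 \<le> h + step_val x \<and> stays_nonneg (h + step_val x) xs"

definition meanders :: "step set \<Rightarrow> nat \<Rightarrow> int \<Rightarrow> step list set" where
  "meanders P n h = {s. length s = n \<and> set s \<subseteq> P \<and> stays_nonneg h s}"

lemma UNIV_step: "(UNIV :: step set) = {U, D, H}"
  using step.exhaust by auto

lemma finite_step_set: "finite (A :: step set)"
  by (rule finite_subset[OF subset_UNIV]) (simp add: UNIV_step)

lemma finite_meanders: "finite (meanders P n h)"
proof -
  have "finite {s :: step list. set s \<subseteq> UNIV \<and> length s = n}"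
    by (rule finite_lists_length_eq) (rule finite_step_set)
  then show ?thesis
    by (rule finite_subset[rotated]) (auto simp: meanders_def)
qed

lemma meanders_0: "meanders P 0 h = {[]}"
  by (auto simp: meanders_def)

lemma meanders_Suc:
  "meanders P (Suc n) h =
     (\<lambda>(x, s). x # s) ` (SIGMA x:{x\<in>P. 0 \<le> h + step_val x}. meanders P n (h + step_val x))"
proof (rule set_eqI)
  fix t
  show "t \<in> meanders P (Suc n) h \<longleftrightarrow>
    t \<in> (\<lambda>(x, s). x # s) ` (SIGMA x:{x\<in>P. 0 \<le> h + step_val x}. meanders P n (h + step_val x))"
    by (cases t) (auto simp: meanders_def image_iff)
qed

lemma card_meanders_Suc:
  "card (meanders P (Suc n) h) =
     (\<Sum>x\<in>P. if 0 \<le> h + step_val x then card (meanders P n (h + step_val x)) else 0)"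
proof -
  have "inj_on (\<lambda>(x, s). x # s) A" for A :: "(step \<times> step list) set"
    by (auto simp: inj_on_def)
  then have "card (meanders P (Suc n) h) =
      card (SIGMA x:{x\<in>P. 0 \<le> h + step_val x}. meanders P n (h + step_val x))"
    unfolding meanders_Suc by (rule card_image)
  also have "\<dots> = (\<Sum>x\<in>{x\<in>P. 0 \<le> h + step_val x}. card (meanders P n (h + step_val x)))"
    by (rule card_SigmaI) (auto intro: finite_step_set finite_meanders)
  also have "\<dots> = (\<Sum>x\<in>P. if 0 \<le> h + step_val x then card (meanders P n (h + step_val x)) else 0)"
    by (rule sum.inter_filter) (rule finite_step_set)
  finally show ?thesis .
qed

definition dyck_meanders :: "nat \<Rightarrow> int \<Rightarrow> int" where
  "dyck_meanders n h = int (card (meanders {U, D} n h))"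

definition motzkin_meanders :: "nat \<Rightarrow> int \<Rightarrow> int" where
  "motzkin_meanders n h = int (card (meanders UNIV n h))"

lemma dyck_meanders_Suc:
  "0 \<le> h \<Longrightarrow> dyck_meanders (Suc n) h =
     dyck_meanders n (h + 1) + (if 1 \<le> h then dyck_meanders n (h - 1) else 0)"
  unfolding dyck_meanders_def card_meanders_Suc by simp

lemma motzkin_meanders_Suc:
  "0 \<le> h \<Longrightarrow> motzkin_meanders (Suc n) h =
     motzkin_meanders n (h + 1) + motzkin_meanders n h
     + (if 1 \<le> h then motzkin_meanders n (h - 1) else 0)"
  unfolding motzkin_meanders_def card_meanders_Suc UNIV_step by simp

lemma inverse_binomial_transform_Suc:
  fixes F :: "nat \<Rightarrow> 'a :: comm_ring_1"
  shows "(\<Sum>k\<le>Suc n. (-1) ^ (Suc n - k) * of_nat (Suc n choose k) * F k)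
       = (\<Sum>k\<le>n. (-1) ^ (n - k) * of_nat (n choose k) * (F (Suc k) - F k))"
proof -
  have "(\<Sum>k\<le>Suc n. (-1) ^ (Suc n - k) * of_nat (Suc n choose k) * F k)
      = (-1) ^ Suc n * F 0 + (\<Sum>k\<le>n. (-1) ^ (n - k) * of_nat (Suc n choose Suc k) * F (Suc k))"
    unfolding sum.atMost_Suc_shift by simp
  also have "\<dots> = ((-1) ^ Suc n * F 0
        + (\<Sum>k\<le>n. (-1) ^ (n - k) * of_nat (n choose Suc k) * F (Suc k)))
      + (\<Sum>k\<le>n. (-1) ^ (n - k) * of_nat (n choose k) * F (Suc k))"
    by (simp add: sum.distrib algebra_simps)
  also have "(-1) ^ Suc n * F 0 + (\<Sum>k\<le>n. (-1) ^ (n - k) * of_nat (n choose Suc k) * F (Suc k))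
      = (\<Sum>k\<le>Suc n. (-1) ^ (Suc n - k) * of_nat (n choose k) * F k)"
    unfolding sum.atMost_Suc_shift by simp
  also have "\<dots> = (\<Sum>k\<le>n. (-1) ^ (Suc n - k) * of_nat (n choose k) * F k)"
    by (simp add: sum.atMost_Suc binomial_eq_0)
  also have "\<dots> = (\<Sum>k\<le>n. - ((-1) ^ (n - k) * of_nat (n choose k) * F k))"
    by (rule sum.cong) (auto simp: Suc_diff_le)
  finally show ?thesis
    by (simp add: sum_subtractf sum_negf algebra_simps)
qed

lemma dyck_meanders_eq_inverse_binomial_transform:
  "0 \<le> h \<Longrightarrow>
     dyck_meanders n h = (\<Sum>k\<le>n. (-1) ^ (n - k) * of_nat (n choose k) * motzkin_meanders k h)"
proof (induction n arbitrary: h)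
  case 0
  then show ?case
    by (simp add: dyck_meanders_def motzkin_meanders_def meanders_0)
next
  case (Suc n)
  let ?T = "\<lambda>h. \<Sum>k\<le>n. (-1) ^ (n - k) * of_nat (n choose k) * motzkin_meanders k h"
  have "(\<Sum>k\<le>Suc n. (-1) ^ (Suc n - k) * of_nat (Suc n choose k) * motzkin_meanders k h)
      = (\<Sum>k\<le>n. (-1) ^ (n - k) * of_nat (n choose k)
           * (motzkin_meanders (Suc k) h - motzkin_meanders k h))"
    by (rule inverse_binomial_transform_Suc)
  also have "\<dots> = (\<Sum>k\<le>n. (-1) ^ (n - k) * of_nat (n choose k) * motzkin_meanders k (h + 1)
      + (if 1 \<le> h then (-1) ^ (n - k) * of_nat (n choose k) * motzkin_meanders k (h - 1) else 0))"
    using Suc.prems by (intro sum.cong) (auto simp: motzkin_meanders_Suc algebra_simps)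
  also have "\<dots> = ?T (h + 1) + (if 1 \<le> h then ?T (h - 1) else 0)"
    by (simp add: sum.distrib sum.If_cases)
  also have "\<dots> = dyck_meanders n (h + 1) + (if 1 \<le> h then dyck_meanders n (h - 1) else 0)"
    using Suc by simp
  also have "\<dots> = dyck_meanders (Suc n) h"
    using Suc.prems by (simp add: dyck_meanders_Suc)
  finally show ?case ..
qed

definition height :: "step list \<Rightarrow> nat \<Rightarrow> int" where
  "height s i = sum_list (map step_val (take i s))"

lemma nonneg_bridge_iff_height:
  "nonneg_bridge s \<longleftrightarrow> (\<forall>i\<le>length s. 0 \<le> height s i) \<and> height s (length s) = 0"
proof -
  have "(\<Sum>j<i. step_val (s ! j)) = height s i" if "i \<le> length s" for i
    using that by (simp add: height_def sum_list_sum_nth atLeast0LessThan min_def)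
  then show ?thesis
    unfolding nonneg_bridge_def by auto
qed

lemma stays_nonneg_iff_height:
  "0 \<le> h \<Longrightarrow> stays_nonneg h s \<longleftrightarrow> (\<forall>i\<le>length s. 0 \<le> h + height s i)"
proof (induction s arbitrary: h)
  case Nil
  then show ?case by (simp add: height_def)
next
  case (Cons x xs)
  have all_le_Suc: "(\<forall>i\<le>Suc m. Q i) \<longleftrightarrow> Q 0 \<and> (\<forall>j\<le>m. Q (Suc j))" for m and Q :: "nat \<Rightarrow> bool"
    by (metis Suc_le_mono le0 not0_implies_Suc)
  show ?case
  proof (cases "0 \<le> h + step_val x")
    case True
    then show ?thesis
      using Cons.IH[OF True] Cons.prems by (simp add: all_le_Suc height_def add.assoc)
  next
    case False
    then have "\<not> 0 \<le> h + height (x # xs) 1"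
      by (simp add: height_def)
    then show ?thesis
      using False by auto
  qed
qed

definition symmetrize :: "step list \<Rightarrow> step list" where
  "symmetrize s = s @ rev (map mirror s)"

lemma mirror_mirror [simp]: "mirror (mirror x) = x"
  by (cases x) auto

lemma step_val_mirror [simp]: "step_val (mirror x) = - step_val x"
  by (cases x) auto

lemma sum_list_step_val_mirror [simp]:
  "sum_list (map (step_val \<circ> mirror) s) = - sum_list (map step_val s)"
  by (simp add: uminus_sum_list_map o_def)

lemma length_symmetrize [simp]: "length (symmetrize s) = 2 * length s"
  by (simp add: symmetrize_def)

lemma height_symmetrize:
  assumes "i \<le> 2 * length s"
  shows "height (symmetrize s) i = height s (min i (2 * length s - i))"
proof (cases "i \<le> length s")
  case True
  then show ?thesis by (simp add: height_def symmetrize_def)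
next
  case False
  define j where "j = i - length s"
  have j: "i = length s + j" "j \<le> length s"
    using False assms by (auto simp: j_def)
  have "height (symmetrize s) i
      = sum_list (map step_val s) - sum_list (map step_val (drop (length s - j) s))"
    using j by (simp add: height_def symmetrize_def take_rev drop_map rev_map[symmetric]
        sum_list_rev)
  also have "\<dots> = height s (length s - j)"
    unfolding height_def
    by (metis add_diff_cancel_right' append_take_drop_id map_append sum_list_append)
  finally show ?thesis
    using j by simp
qed

lemma nonneg_bridge_symmetrize: "nonneg_bridge (symmetrize s) \<longleftrightarrow> stays_nonneg 0 s"
proof -
  let ?n = "length s"
  have "(\<forall>i\<le>2 * ?n. 0 \<le> height (symmetrize s) i) \<longleftrightarrow> (\<forall>i\<le>?n. 0 \<le> height s i)"
  proof
    assume nonneg: "\<forall>i\<le>2 * ?n. 0 \<le> height (symmetrize s) i"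
    show "\<forall>i\<le>?n. 0 \<le> height s i"
    proof (intro allI impI)
      fix i
      assume "i \<le> ?n"
      then have "height (symmetrize s) i = height s i"
        using height_symmetrize[of i s] by simp
      then show "0 \<le> height s i"
        using nonneg[rule_format, of i] \<open>i \<le> ?n\<close> by simp
    qed
  next
    assume "\<forall>i\<le>?n. 0 \<le> height s i"
    then show "\<forall>i\<le>2 * ?n. 0 \<le> height (symmetrize s) i"
      using height_symmetrize[of _ s] by (simp add: min_def)
  qed
  moreover have "height (symmetrize s) (2 * ?n) = 0"
    using height_symmetrize[of "2 * ?n" s] by (simp add: height_def)
  ultimately show ?thesis
    by (simp add: nonneg_bridge_iff_height stays_nonneg_iff_height)
qed

lemma symmetric_path_symmetrize: "symmetric_path (symmetrize s)"
  unfolding symmetric_path_def symmetrize_def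
  by (auto simp: nth_append rev_nth)

lemma symmetric_path_eq_symmetrize:
  assumes "length t = 2 * n" "symmetric_path t"
  shows "t = symmetrize (take n t)"
proof (rule nth_equalityI)
  show "length t = length (symmetrize (take n t))"
    using assms by (simp add: symmetrize_def)
next
  fix i assume i: "i < length t"
  show "t ! i = symmetrize (take n t) ! i"
  proof (cases "i < n")
    case True
    then show ?thesis
      using assms(1) by (simp add: symmetrize_def nth_append min_def)
  next
    case False
    have "t ! (length t - 1 - (length t - 1 - i)) = mirror (t ! (length t - 1 - i))"
      using assms(2) i unfolding symmetric_path_def by auto
    then have "t ! i = mirror (t ! (2 * n - 1 - i))"
      using i assms(1) by simp
    then show ?thesis
      using False i assms(1) by (simp add: symmetrize_def nth_append rev_nth min_def mult_2)
  qed
qed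

lemma symmetric_bridges_eq_image_symmetrize:
  assumes "mirror ` P \<subseteq> P"
  shows "{t. length t = 2 * n \<and> set t \<subseteq> P \<and> nonneg_bridge t \<and> symmetric_path t}
       = symmetrize ` meanders P n 0"
proof (intro set_eqI iffI)
  fix t
  assume "t \<in> {t. length t = 2 * n \<and> set t \<subseteq> P \<and> nonneg_bridge t \<and> symmetric_path t}"
  then have t: "length t = 2 * n" "set t \<subseteq> P" "nonneg_bridge t" "symmetric_path t"
    by auto
  then have t_eq: "t = symmetrize (take n t)"
    by (blast intro: symmetric_path_eq_symmetrize)
  have "take n t \<in> meanders P n 0"
    using t t_eq nonneg_bridge_symmetrize[of "take n t"] set_take_subset[of n t]
    by (auto simp: meanders_def)
  then show "t \<in> symmetrize ` meanders P n 0"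
    using t_eq by blast
next
  fix t
  assume "t \<in> symmetrize ` meanders P n 0"
  then obtain s where "s \<in> meanders P n 0" "t = symmetrize s"
    by blast
  then show "t \<in> {t. length t = 2 * n \<and> set t \<subseteq> P \<and> nonneg_bridge t \<and> symmetric_path t}"
    using assms[unfolded image_subset_iff] nonneg_bridge_symmetrize symmetric_path_symmetrize
    by (auto simp: meanders_def symmetrize_def)
qed

lemma card_symmetric_bridges:
  assumes "mirror ` P \<subseteq> P"
  shows "card {t. length t = 2 * n \<and> set t \<subseteq> P \<and> nonneg_bridge t \<and> symmetric_path t}
       = card (meanders P n 0)"
proof -
  have "inj_on symmetrize (meanders P n 0)"
    by (auto simp: inj_on_def symmetrize_def meanders_def)
  then show ?thesis
    unfolding symmetric_bridges_eq_image_symmetrize[OF assms] by (rule card_image)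
qed

lemma sym_dyck_eq_dyck_meanders: "int (sym_dyck n) = dyck_meanders n 0"
  using card_symmetric_bridges[of "{U, D}" n]
  by (simp add: sym_dyck_def dyck_path_def dyck_meanders_def conj_assoc)

lemma sym_motzkin_eq_motzkin_meanders: "int (sym_motzkin n) = motzkin_meanders n 0"
  using card_symmetric_bridges[of UNIV n]
  by (simp add: sym_motzkin_def motzkin_path_def motzkin_meanders_def)

theorem theorem3p2:
  fixes n :: nat
  shows "int (sym_dyck n) = (\<Sum>k=0..n. (-1) ^ (n - k) * int (n choose k) * int (sym_motzkin k))"
  using dyck_meanders_eq_inverse_binomial_transform[of 0 n]
  by (simp add: sym_dyck_eq_dyck_meanders sym_motzkin_eq_motzkin_meanders atLeast0AtMost)

end
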